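(* Let $X=\{x_j:j\in J\}\subset\mathbb{R}^2$ be finite with quadratic min-power centre $s^*$ and centroid $M$, and let $r\in J$ be such that $x_r$ is a point of $X$ farthest from $M$. If $s^*\in\mathrm{int}(V(x_j))$ for some $j\in J$, then $s^*=M_r$.
   Context: $n=|J|$; $s^*$ is the unique minimiser of $P(s)=\sum_{i\in J}\|s-x_i\|^2+\max_{i\in J}\|s-x_i\|^2$; $M=\frac1n\sum_ix_i$; $M_j=\frac{1}{n+1}\big(x_j+\sum_{i\in J}x_i\big)$; $V(x_j)=\{s:\|s-x_j\|=\max_{i\in J}\|s-x_i\|\}$ and $\mathrm{int}$ denotes its interior. *)

theory Defs
  imports "HOL-Analysis.Analysis"
begin

definition qpower :: "'j set \<Rightarrow> ('j \<Rightarrow> real^2) \<Rightarrow> real^2 \<Rightarrow> real" where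
  "qpower J x s = (\<Sum>i\<in>J. (norm (s - x i))\<^sup>2) + (MAX i\<in>J. (norm (s - x i))\<^sup>2)"

definition centroid_pt :: "'j set \<Rightarrow> ('j \<Rightarrow> real^2) \<Rightarrow> real^2" where
  "centroid_pt J x = (1 / real (card J)) *\<^sub>R (\<Sum>i\<in>J. x i)"

definition M_pt :: "'j set \<Rightarrow> ('j \<Rightarrow> real^2) \<Rightarrow> 'j \<Rightarrow> real^2" where
  "M_pt J x j = (1 / (real (card J) + 1)) *\<^sub>R (x j + (\<Sum>i\<in>J. x i))"

definition far_cell :: "'j set \<Rightarrow> ('j \<Rightarrow> real^2) \<Rightarrow> 'j \<Rightarrow> (real^2) set" where
  "far_cell J x j = {s. norm (s - x j) = (MAX i\<in>J. norm (s - x i))}"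

end

theory Submission
  imports Defs
begin

text \<open>On the closed cell V(x_j) the maximum term of the cost is the j-th one,
  so there the cost equals a sum of n + 1 squared distances, the j-th point
  counted twice. By the parallel axis theorem this is a constant plus
  (n + 1) |t - M_j|^2, so a minimiser in the interior of the cell must be
  M_j. Then M_j \<in> V(x_j) gives |M_j - x_r| \<le> |M_j - x_j|, and since
  M_j - M = (x_j - M)/(n + 1), a short inner-product computation together with
  |x_j - M| \<le> |x_r - M| forces x_j = x_r.\<close>

lemma power2_norm_diff_split:
  fixes t c y :: "'a::real_inner"
  shows "(norm (t - y))\<^sup>2 = (norm (c - y))\<^sup>2 + 2 * ((t - c) \<bullet> (c - y)) + (norm (t - c))\<^sup>2"
  using dot_norm[of "t - c" "c - y"] by simp

lemma sum_norm_diff_sq_parallel_axis: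
  fixes x :: "'j \<Rightarrow> 'a::real_inner"
  assumes "finite J" and balanced: "(\<Sum>i\<in>J. c - x i) + (c - y) = 0"
  shows "(\<Sum>i\<in>J. (norm (t - x i))\<^sup>2) + (norm (t - y))\<^sup>2
       = (\<Sum>i\<in>J. (norm (c - x i))\<^sup>2) + (norm (c - y))\<^sup>2
         + (real (card J) + 1) * (norm (t - c))\<^sup>2"
proof -
  have "(\<Sum>i\<in>J. (norm (t - x i))\<^sup>2)
      = (\<Sum>i\<in>J. (norm (c - x i))\<^sup>2 + 2 * ((t - c) \<bullet> (c - x i)) + (norm (t - c))\<^sup>2)"
    by (intro sum.cong refl power2_norm_diff_split)
  also have "\<dots> = (\<Sum>i\<in>J. (norm (c - x i))\<^sup>2) + 2 * ((t - c) \<bullet> (\<Sum>i\<in>J. c - x i))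
      + real (card J) * (norm (t - c))\<^sup>2"
    by (simp add: sum.distrib inner_sum_right sum_distrib_left)
  finally have "(\<Sum>i\<in>J. (norm (t - x i))\<^sup>2) + (norm (t - y))\<^sup>2
      = (\<Sum>i\<in>J. (norm (c - x i))\<^sup>2) + (norm (c - y))\<^sup>2
        + 2 * ((t - c) \<bullet> ((\<Sum>i\<in>J. c - x i) + (c - y)))
        + (real (card J) + 1) * (norm (t - c))\<^sup>2"
    using power2_norm_diff_split[of t y c] by (simp add: inner_add_right algebra_simps)
  with balanced show ?thesis by simp
qed

lemma M_pt_balanced:
  assumes "finite J"
  shows "(\<Sum>i\<in>J. M_pt J x j - x i) + (M_pt J x j - x j) = 0"
proof -
  have "(\<Sum>i\<in>J. M_pt J x j - x i) + (M_pt J x j - x j)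
      = (real (card J) + 1) *\<^sub>R M_pt J x j - (x j + (\<Sum>i\<in>J. x i))"
    by (simp add: sum_subtractf scaleR_add_left scaleR_conv_of_real distrib_right)
  also have "(real (card J) + 1) *\<^sub>R M_pt J x j = x j + (\<Sum>i\<in>J. x i)"
    unfolding M_pt_def by simp
  finally show ?thesis by simp
qed

lemma far_cell_norm_le:
  assumes "finite J" "i \<in> J" "t \<in> far_cell J x j"
  shows "norm (t - x i) \<le> norm (t - x j)"
  using assms unfolding far_cell_def by simp

lemma far_cell_Max_sq:
  assumes "finite J" "j \<in> J" "t \<in> far_cell J x j"
  shows "(MAX i\<in>J. (norm (t - x i))\<^sup>2) = (norm (t - x j))\<^sup>2"
  using assms far_cell_norm_le[OF assms(1) _ assms(3)]
  by (intro Max_eqI) (auto intro: power_mono)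

lemma qpower_on_far_cell:
  assumes "finite J" "j \<in> J" "t \<in> far_cell J x j"
  shows "qpower J x t = (\<Sum>i\<in>J. (norm (M_pt J x j - x i))\<^sup>2) + (norm (M_pt J x j - x j))\<^sup>2
           + (real (card J) + 1) * (norm (t - M_pt J x j))\<^sup>2"
  unfolding qpower_def far_cell_Max_sq[OF assms]
  by (rule sum_norm_diff_sq_parallel_axis[OF assms(1) M_pt_balanced[OF assms(1)]])

text \<open>A small step from s towards c stays in S and strictly decreases |t - c|.\<close>

lemma interior_minimiser_of_dist_sq:
  fixes s c :: "'a::real_normed_vector"
  assumes "s \<in> interior S" and "m > 0"
    and f_on_S: "\<And>t. t \<in> S \<Longrightarrow> f t = K + m * (norm (t - c))\<^sup>2"
    and min: "\<And>t. f s \<le> f t"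
  shows "s = c"
proof (rule ccontr)
  assume "s \<noteq> c"
  then have d: "norm (s - c) > 0" by simp
  obtain e where e: "e > 0" "ball s e \<subseteq> S"
    using assms(1) by (meson mem_interior)
  define h where "h = min (1/2) (e / (2 * norm (s - c)))"
  have h: "0 < h" "h \<le> 1/2" "h * norm (s - c) < e"
    using d e unfolding h_def by (auto simp: min_def field_simps)
  define t where "t = s + h *\<^sub>R (c - s)"
  have "dist s t = h * norm (s - c)"
    unfolding t_def dist_norm using h by (simp add: norm_minus_commute)
  with h e have "t \<in> S" by auto
  have "t - c = (1 - h) *\<^sub>R (s - c)" unfolding t_def by (simp add: algebra_simps)
  with h have "norm (t - c) = (1 - h) * norm (s - c)" by simp
  also have "\<dots> < norm (s - c)" using h d by simp
  finally have "(norm (t - c))\<^sup>2 < (norm (s - c))\<^sup>2"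
    by (intro power_strict_mono) auto
  moreover have "s \<in> S" using assms(1) interior_subset by blast
  ultimately have "f t < f s" using \<open>t \<in> S\<close> f_on_S \<open>m > 0\<close> by simp
  with min[of t] show False by simp
qed

lemma eq_if_norm_shrunk_diff_le:
  fixes u v :: "'a::real_inner"
  assumes "0 < k" "k \<le> 1/2"
    and le: "norm (k *\<^sub>R u - v) \<le> norm ((1 - k) *\<^sub>R u)"
    and uv: "norm u \<le> norm v"
  shows "u = v"
proof -
  define A B p where "A = u \<bullet> u" and "B = v \<bullet> v" and "p = u \<bullet> v"
  have "(norm (k *\<^sub>R u - v))\<^sup>2 \<le> (norm ((1 - k) *\<^sub>R u))\<^sup>2"
    using le by (simp add: power_mono)
  then have "k * k * A - 2 * k * p + B \<le> (1 - k) * (1 - k) * A"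
    unfolding A_def B_def p_def
    by (simp add: power2_norm_eq_inner inner_diff_left inner_diff_right inner_commute
        algebra_simps)
  then have key: "B - A \<le> 2 * k * (p - A)" by (simp add: algebra_simps)
  have AB: "A \<le> B"
    using uv unfolding A_def B_def by (simp add: power_mono flip: power2_norm_eq_inner)
  have "p - A \<ge> 0"
  proof (rule ccontr)
    assume "\<not> p - A \<ge> 0"
    then have "2 * k * (p - A) < 0" using \<open>0 < k\<close> by (simp add: mult_pos_neg)
    with key AB show False by linarith
  qed
  then have "2 * k * (p - A) \<le> 1 * (p - A)"
    using assms(2) by (intro mult_right_mono) auto
  with key AB have "(u - v) \<bullet> (u - v) \<le> 0"
    unfolding A_def B_def p_def by (simp add: inner_diff_left inner_diff_right inner_commute)
  then have "(u - v) \<bullet> (u - v) = 0" using inner_ge_zero[of "u - v"] by linarith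
  then show "u = v" by simp
qed

lemma M_pt_eq_centroid_shift:
  assumes "finite J" "J \<noteq> {}"
  shows "M_pt J x j = centroid_pt J x + (1 / (real (card J) + 1)) *\<^sub>R (x j - centroid_pt J x)"
proof -
  define n M where "n = real (card J)" and "M = centroid_pt J x"
  have "n > 0" unfolding n_def using assms by (simp add: card_gt_0_iff)
  then have sum_eq: "(\<Sum>i\<in>J. x i) = n *\<^sub>R M"
    unfolding M_def centroid_pt_def n_def by simp
  have "M + (1 / (n + 1)) *\<^sub>R (x j - M) = (1 / (n + 1)) *\<^sub>R ((n + 1) *\<^sub>R M + (x j - M))"
    using \<open>n > 0\<close> by (simp add: scaleR_add_right)
  also have "\<dots> = (1 / (n + 1)) *\<^sub>R (x j + (\<Sum>i\<in>J. x i))"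
    unfolding sum_eq by (simp add: algebra_simps)
  finally show ?thesis unfolding M_pt_def n_def M_def by simp
qed

theorem corollary1:
  fixes J :: "'j set" and x :: "'j \<Rightarrow> real^2" and s :: "real^2" and r :: 'j
  assumes "finite J" and "J \<noteq> {}"
    and "\<forall>t. qpower J x s \<le> qpower J x t"
    and "\<forall>t. qpower J x s = qpower J x t \<longrightarrow> t = s"
    and "r \<in> J"
    and "\<forall>i\<in>J. norm (x i - centroid_pt J x) \<le> norm (x r - centroid_pt J x)"
    and "\<exists>j\<in>J. s \<in> interior (far_cell J x j)"
  shows "s = M_pt J x r"
proof -
  obtain j where j: "j \<in> J" "s \<in> interior (far_cell J x j)" using assms(7) by blast
  have s_eq: "s = M_pt J x j"
    using interior_minimiser_of_dist_sq[OF j(2) _ qpower_on_far_cell[OF assms(1) j(1)]] assms(3)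
    by simp
  define M k where "M = centroid_pt J x" and "k = 1 / (real (card J) + 1)"
  have s_M: "s = M + k *\<^sub>R (x j - M)"
    unfolding s_eq M_def k_def by (rule M_pt_eq_centroid_shift[OF assms(1,2)])
  have k: "0 < k" "k \<le> 1/2"
    using assms(1,2) unfolding k_def by (auto simp: card_gt_0_iff Suc_le_eq field_simps)
  have "norm (s - x r) \<le> norm (s - x j)"
    using far_cell_norm_le[OF assms(1,5)] j(2) interior_subset by blast
  then have "norm (k *\<^sub>R (x j - M) - (x r - M)) \<le> norm ((1 - k) *\<^sub>R (x j - M))"
    unfolding s_M by (simp add: algebra_simps norm_minus_commute)
  from eq_if_norm_shrunk_diff_le[OF k this] assms(6) j(1) have "x j = x r"
    unfolding M_def by simp
  then show ?thesis unfolding s_eq M_pt_def by simp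
qed

end
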